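(* Let $I\subset[0,\infty)$ be an interval, let $a,b\in I^\circ$ with $a<b$, and let $f:I\to\mathbb{R}$ be twice differentiable on $I^\circ$ with $f''\in L^1([a,b])$. Let $q>1$ and $p=\frac{q}{q-1}$, and assume $|f''|^q$ is $h$-convex on $[a,b]$. Then $$\left|\frac{f(a)+f(b)}{2}-\frac{1}{b-a}\int_a^b f(x)\,dx\right|\le \frac{(b-a)^2}{16\cdot 2^{1/p}}\,\beta^{1/p}\Big(\frac12,p+1\Big)\Big(\int_0^1 h(t)\,dt\Big)^{1/q}\left[\Big(|f''(a)|^q+\Big|f''\Big(\tfrac{a+b}{2}\Big)\Big|^q\Big)^{1/q}+\Big(|f''(b)|^q+\Big|f''\Big(\tfrac{a+b}{2}\Big)\Big|^q\Big)^{1/q}\right].$$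
   Context: Let $J$ be an interval with $(0,1)\subseteq J$ and $h:J\to\mathbb{R}$ a non-negative function, not identically zero, which is Lebesgue integrable on $(0,1)$. A non-negative function $g$ defined on an interval $K$ is called $h$-convex on $K$ if for all $x,y\in K$ and all $t\in(0,1)$: $g(tx+(1-t)y)\le h(t)g(x)+h(1-t)g(y)$. The Beta function is $\beta(u,v)=\int_0^1 t^{u-1}(1-t)^{v-1}dt$ for $u,v>0$. $I^\circ$ denotes the interior of $I$. *)

theory Defs
  imports "HOL-Analysis.Analysis"
begin

definition h_convex_on :: "(real \<Rightarrow> real) \<Rightarrow> real set \<Rightarrow> (real \<Rightarrow> real) \<Rightarrow> bool" where
  "h_convex_on h K g \<longleftrightarrow> (\<forall>x\<in>K. 0 \<le> g x) \<and>
     (\<forall>x\<in>K. \<forall>y\<in>K. \<forall>t\<in>{0<..<1}. g (t * x + (1 - t) * y) \<le> h t * g x + h (1 - t) * g y)"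

definition Beta_fun :: "real \<Rightarrow> real \<Rightarrow> real" where
  "Beta_fun u v = (\<integral>t\<in>{0<..<1}. t powr (u - 1) * (1 - t) powr (v - 1) \<partial>lborel)"

end

theory Submission
  imports Defs
begin

text \<open>
  Integrating by parts twice gives the kernel identity
  \<open>(f a + f b) / 2 - (\<integral>\<^sub>a\<^sup>b f) / (b - a) = (\<integral>\<^sub>a\<^sup>b K f'') / (b - a)\<close> with
  \<open>K x = (x - a) (b - x) / 2\<close>. Splitting \<open>[a, b]\<close> at the midpoint \<open>m\<close> and substituting
  \<open>x = s e + (1 - s) m\<close> (\<open>e = a, b\<close>) turns \<open>\<integral> K \<bar>f''\<bar>\<close> into
  \<open>(b - a)\<^sup>3 / 16\<close> times the sum of \<open>\<integral>\<^sub>0\<^sup>1 (1 - s\<^sup>2) \<bar>f'' (s e + (1 - s) m)\<bar> ds\<close>.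
  H\<ouml>lder's inequality splits each of these into \<open>(\<integral>\<^sub>0\<^sup>1 (1 - s\<^sup>2)\<^sup>p)\<^sup>1\<^sup>/\<^sup>p\<close>, which is
  \<open>(\<beta>(1/2, p + 1) / 2)\<^sup>1\<^sup>/\<^sup>p\<close> via \<open>s = \<surd>t\<close>, and \<open>(\<integral>\<^sub>0\<^sup>1 \<bar>f'' (s e + (1 - s) m)\<bar>\<^sup>q ds)\<^sup>1\<^sup>/\<^sup>q\<close>,
  which \<open>h\<close>-convexity bounds by \<open>((\<integral>\<^sub>0\<^sup>1 h) (\<bar>f'' e\<bar>\<^sup>q + \<bar>f'' m\<bar>\<^sup>q))\<^sup>1\<^sup>/\<^sup>q\<close>.
\<close>

lemma Youngs_inequality_scaled:
  fixes x y A B p q :: real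
  assumes p: "p > 1" and q: "q > 1" and pq: "1/p + 1/q = 1"
    and x: "0 \<le> x" and y: "0 \<le> y" and A: "A > 0" and B: "B > 0"
  shows "x * y \<le> A powr (1/p) * B powr (1/q) * (x powr p / (p * A) + y powr q / (q * B))"
proof -
  have AB: "0 < A powr (1/p)" "0 < B powr (1/q)" using A B by auto
  have "(x / A powr (1/p)) * (y / B powr (1/q))
      \<le> (x / A powr (1/p)) powr p / p + (y / B powr (1/q)) powr q / q"
    by (rule Youngs_inequality) (use p q pq x y AB in auto)
  also have "\<dots> = x powr p / (p * A) + y powr q / (q * B)"
    using A B p q x y by (simp add: powr_divide powr_powr mult.commute)
  finally show ?thesis
    using AB by (simp add: field_simps)
qed

lemma Holder_integral_le:
  fixes X G w :: "real \<Rightarrow> real" and S :: "real set" and p q :: real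
  assumes p: "p > 1" and q: "q > 1" and pq: "1/p + 1/q = 1"
    and XG_int: "(\<lambda>s. X s * G s) integrable_on S"
    and Xp_int: "(\<lambda>s. X s powr p) integrable_on S"
    and w_int: "w integrable_on S"
    and X0: "\<And>s. s \<in> S \<Longrightarrow> 0 \<le> X s" and G0: "\<And>s. s \<in> S \<Longrightarrow> 0 \<le> G s"
    and Gw: "\<And>s. s \<in> S \<Longrightarrow> G s powr q \<le> w s"
    and P_pos: "integral S (\<lambda>s. X s powr p) > 0"
  shows "integral S (\<lambda>s. X s * G s) \<le> integral S (\<lambda>s. X s powr p) powr (1/p) * integral S w powr (1/q)"
proof -
  define P where "P = integral S (\<lambda>s. X s powr p)"
  define W where "W = integral S w"
  define I where "I = integral S (\<lambda>s. X s * G s)"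
  have W0: "W \<ge> 0" unfolding W_def
    by (rule integral_nonneg[OF w_int]) (meson G0 Gw order_trans powr_ge_zero)
  have scaled: "I \<le> P powr (1/p) * Q powr (1/q) * (1/p + W / (q * Q))" if Q: "Q > 0" for Q
  proof -
    define c1 where "c1 = P powr (1/p) * Q powr (1/q) / (p * P)"
    define c2 where "c2 = P powr (1/p) * Q powr (1/q) / (q * Q)"
    have int: "(\<lambda>s. c1 * X s powr p + c2 * w s) integrable_on S"
      using integrable_cmul[OF Xp_int, of c1] integrable_cmul[OF w_int, of c2]
      by (simp add: integrable_add)
    have "I \<le> integral S (\<lambda>s. c1 * X s powr p + c2 * w s)"
      unfolding I_def
    proof (rule integral_le[OF XG_int int])
      fix s assume s: "s \<in> S"
      have "X s * G s \<le> P powr (1/p) * Q powr (1/q) * (X s powr p / (p * P) + G s powr q / (q * Q))"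
        using Youngs_inequality_scaled[OF p q pq X0[OF s] G0[OF s]] P_pos Q unfolding P_def by blast
      also have "\<dots> \<le> P powr (1/p) * Q powr (1/q) * (X s powr p / (p * P) + w s / (q * Q))"
        using Gw[OF s] Q q by (intro mult_left_mono add_left_mono divide_right_mono) auto
      finally show "X s * G s \<le> c1 * X s powr p + c2 * w s"
        unfolding c1_def c2_def by (simp add: field_simps)
    qed
    also have "\<dots> = c1 * P + c2 * W"
      using integrable_cmul[OF Xp_int, of c1] integrable_cmul[OF w_int, of c2]
      by (simp add: integral_add P_def W_def)
    also have "\<dots> = P powr (1/p) * Q powr (1/q) * (1/p + W / (q * Q))"
      unfolding c1_def c2_def using P_pos Q p q by (simp add: P_def field_simps)
    finally show ?thesis .
  qed
  show ?thesis
  proof (cases "W > 0")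
    case True
    with scaled[OF True] pq show ?thesis unfolding I_def P_def W_def by simp
  next
    case False
    then have W: "W = 0" using W0 by simp
    have "I \<le> 0"
    proof (rule ccontr)
      assume "\<not> I \<le> 0"
      then have I0: "I > 0" by simp
      \<comment> \<open>For \<open>W = 0\<close> the scaled bound reads \<open>I \<le> P powr (1/p) * Q powr (1/q) / p\<close>; this \<open>Q\<close> makes it \<open>I \<le> I / p\<close>.\<close>
      define Q where "Q = (I / P powr (1/p)) powr q"
      have Q0: "Q > 0" using I0 P_pos unfolding Q_def P_def by simp
      have "Q powr (1/q) = I / P powr (1/p)"
        unfolding Q_def using I0 P_pos q by (simp add: powr_powr P_def)
      with scaled[OF Q0] W P_pos have "I \<le> I / p" by (simp add: P_def)
      with I0 p show False by (simp add: field_simps)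
    qed
    then show ?thesis using W unfolding I_def P_def W_def by simp
  qed
qed

lemma has_integral_one_minus_square_powr:
  fixes p :: real
  assumes p: "p > 0"
  shows "((\<lambda>s. (1 - s\<^sup>2) powr p) has_integral Beta (1/2) (p + 1) / 2) {0..1}"
proof -
  define g where "g = (\<lambda>s::real. (1 - s\<^sup>2) powr p)"
  have g_cont: "continuous_on {0..1} g" unfolding g_def
    using p by (intro continuous_on_powr' continuous_intros) (auto intro: power_le_one)
  \<comment> \<open>Substituting \<open>s = \<surd>t\<close> turns \<open>g\<close> into the Beta integrand \<open>t\<^sup>-\<^sup>1\<^sup>/\<^sup>2 (1 - t)\<^sup>p / 2\<close>.\<close>
  have "((\<lambda>t. (inverse (sqrt t) / 2) *\<^sub>R g (sqrt t)) has_integral integral {sqrt 0..sqrt 1} g) {0..1}"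
  proof (rule has_integral_substitution_strong[where s="{0}" and c=0 and d=1])
    fix t :: real assume "t \<in> {0..1} - {0}"
    then have "t > 0" by auto
    then show "(sqrt has_field_derivative inverse (sqrt t) / 2) (at t within {0..1})"
      using DERIV_real_sqrt[of t] DERIV_subset by blast
  qed (use g_cont in \<open>auto intro: continuous_intros\<close>)
  then have "((\<lambda>t. (inverse (sqrt t) / 2) *\<^sub>R g (sqrt t)) has_integral integral {0..1} g) {0<..<1}"
    by (simp add: has_integral_Icc_iff_Ioo)
  also have "?this \<longleftrightarrow> ((\<lambda>t. 1/2 * (t powr (1/2 - 1) * (1 - t) powr (p + 1 - 1)))
                          has_integral integral {0..1} g) {0<..<1}"
  proof (rule has_integral_cong)
    fix t :: real assume t: "t \<in> {0<..<1}"
    have "t powr (1/2 - 1) = inverse (t powr (1/2))"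
      by (simp add: powr_minus [symmetric])
    with t show "(inverse (sqrt t) / 2) *\<^sub>R g (sqrt t) = 1/2 * (t powr (1/2 - 1) * (1 - t) powr (p + 1 - 1))"
      by (simp add: g_def powr_half_sqrt)
  qed
  finally have by_substitution: "((\<lambda>t. 1/2 * (t powr (1/2 - 1) * (1 - t) powr (p + 1 - 1)))
                  has_integral integral {0..1} g) {0<..<1}" .
  have by_Beta: "((\<lambda>t. 1/2 * (t powr (1/2 - 1) * (1 - t) powr (p + 1 - 1)))
                    has_integral 1/2 * Beta (1/2) (p + 1)) {0<..<1}"
    using has_integral_Beta_real[of "1/2" "p + 1"] p
    by (intro has_integral_mult_right) (simp add: has_integral_Icc_iff_Ioo)
  from has_integral_unique[OF by_substitution by_Beta]
  have "integral {0..1} g = Beta (1/2) (p + 1) / 2"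
    by simp
  then show ?thesis
    using integrable_continuous_real[OF g_cont] unfolding g_def
    by (metis has_integral_integrable_integral)
qed

lemma Beta_fun_eq_Beta:
  fixes u v :: real
  assumes "u > 0" "v > 0"
  shows "Beta_fun u v = Beta u v"
proof -
  define g where "g = (\<lambda>t::real. t powr (u - 1) * (1 - t) powr (v - 1))"
  have g_Beta: "(g has_integral Beta u v) {0<..<1}"
    using has_integral_Beta_real[OF assms] unfolding g_def
    by (simp add: has_integral_Icc_iff_Ioo)
  have "g absolutely_integrable_on {0<..<1}"
    by (rule nonnegative_absolutely_integrable_1) (use g_Beta in \<open>auto simp: g_def\<close>)
  then have "set_integrable lborel {0<..<1} g"
    unfolding set_integrable_def
    by (subst integrable_completion[symmetric]) (auto simp: g_def)
  then have "(LINT t:{0<..<1}|lborel. g t) = integral {0<..<1} g"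
    by (rule set_borel_integral_eq_integral)
  also have "\<dots> = Beta u v"
    using g_Beta by (rule integral_unique)
  finally show ?thesis
    unfolding Beta_fun_def g_def by simp
qed

lemma has_integral_reflect_unit_interval:
  fixes h :: "real \<Rightarrow> real"
  assumes "(h has_integral H) {0<..<1}"
  shows "((\<lambda>s. h (1 - s)) has_integral H) {0<..<1}"
proof -
  have "(h has_integral H) {0..1}"
    using assms by (simp add: has_integral_Icc_iff_Ioo)
  then have "((\<lambda>x. h (-x)) has_integral H) {-1..-0}"
    by (rule has_integral_reflect_real[THEN iffD2])
  then have "((\<lambda>x. h (-x)) has_integral H) (cbox (-1) 0)"
    by simp
  from has_integral_affinity'[OF this, of 1 "-1"]
  show ?thesis by (simp add: has_integral_Icc_iff_Ioo)
qed

lemma hermite_hadamard_kernel_identity: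
  fixes f f' f'' :: "real \<Rightarrow> real"
  assumes ab: "a \<le> b"
    and f': "\<And>x. x \<in> {a..b} \<Longrightarrow> (f has_real_derivative f' x) (at x)"
    and f'': "\<And>x. x \<in> {a..b} \<Longrightarrow> (f' has_real_derivative f'' x) (at x)"
  shows "((\<lambda>x. (x - a) * (b - x) / 2 * f'' x) has_integral
           (b - a) / 2 * (f a + f b) - integral {a..b} f) {a..b}"
proof -
  define K where "K x = (x - a) * (b - x) / 2" for x
  \<comment> \<open>Since \<open>K' x = (a + b) / 2 - x\<close>, \<open>F\<close> is an antiderivative of \<open>K f'' + f\<close>.\<close>
  define F where "F x = K x * f' x - ((a + b) / 2 - x) * f x" for x
  have F': "(F has_real_derivative K x * f'' x + f x) (at x)" if x: "x \<in> {a..b}" for x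
    unfolding F_def K_def
    by (rule derivative_eq_intros f'[OF x] f''[OF x] refl | simp add: field_simps)+
  have FTC: "((\<lambda>x. K x * f'' x + f x) has_integral F b - F a) {a..b}"
    by (rule fundamental_theorem_of_calculus)
      (use ab F' in \<open>auto simp: has_real_derivative_iff_has_vector_derivative[symmetric]
                           intro: has_field_derivative_at_within\<close>)
  have "continuous_on {a..b} f"
    using f' by (intro continuous_at_imp_continuous_on) (meson DERIV_isCont)
  then have "(f has_integral integral {a..b} f) {a..b}"
    by (intro integrable_integral integrable_continuous_real)
  from has_integral_diff[OF FTC this]
  have "((\<lambda>x. K x * f'' x) has_integral F b - F a - integral {a..b} f) {a..b}"
    by simp
  moreover have "F b - F a = (b - a) / 2 * (f a + f b)"
    by (simp add: F_def K_def field_simps)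
  ultimately show ?thesis
    by (simp add: K_def)
qed

lemma has_integral_closed_segment_unit:
  fixes g :: "real \<Rightarrow> real"
  assumes g: "(g has_integral I) (closed_segment u v)" and uv: "u \<noteq> v"
  shows "((\<lambda>s. g (s * v + (1 - s) * u)) has_integral I / \<bar>v - u\<bar>) {0..1}"
proof -
  have seg: "closed_segment u v = cbox (min u v) (max u v)"
    by (simp add: closed_segment_eq_real_ivl min_def max_def)
  have aff: "(\<lambda>x. (1 / (v - u)) *\<^sub>R x + - ((1 / (v - u)) *\<^sub>R u)) = (\<lambda>x. (1 / (v - u)) * x + - u / (v - u))"
    by auto
  have "(\<lambda>x. (1 / (v - u)) * x + - u / (v - u)) ` {min u v..max u v} = {0..1}"
  proof (cases "u < v")
    case True
    then show ?thesis
      unfolding image_affinity_atLeastAtMost by (auto simp: min_def max_def diff_divide_distrib[symmetric])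
  next
    case False
    with uv have "v < u" by simp
    then show ?thesis
      unfolding image_affinity_atLeastAtMost by (auto simp: min_def max_def diff_divide_distrib[symmetric])
  qed
  with g uv seg have "((\<lambda>s. g ((v - u) *\<^sub>R s + u)) has_integral (1 / \<bar>v - u\<bar> ^ DIM(real)) *\<^sub>R I) {0..1}"
    using has_integral_affinity[of g I "min u v" "max u v" "v - u" u] by (simp add: aff)
  then show ?thesis
    by (simp add: algebra_simps divide_inverse)
qed

lemma hermite_hadamard_kernel_half_has_integral:
  fixes u :: "real \<Rightarrow> real"
  assumes int: "(\<lambda>x. (x - a) * (b - x) / 2 * \<bar>u x\<bar>) integrable_on {a..b}"
    and ab: "a < b" and e: "e \<in> {a, b}"
  shows "((\<lambda>s. (1 - s\<^sup>2) * \<bar>u (s * e + (1 - s) * ((a + b) / 2))\<bar>) has_integral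
           16 / (b - a) ^ 3 * integral (closed_segment ((a + b) / 2) e) (\<lambda>x. (x - a) * (b - x) / 2 * \<bar>u x\<bar>)) {0..1}"
proof -
  define m where "m = (a + b) / 2"
  define \<phi> where "\<phi> = (\<lambda>x. (x - a) * (b - x) / 2 * \<bar>u x\<bar>)"
  have seg: "closed_segment m e = {min m e..max m e}"
    by (simp add: closed_segment_eq_real_ivl min_def max_def)
  have "\<phi> integrable_on closed_segment m e"
    unfolding seg using e ab
    by (intro integrable_subinterval_real[OF int[folded \<phi>_def]]) (auto simp: m_def)
  then have "(\<phi> has_integral integral (closed_segment m e) \<phi>) (closed_segment m e)"
    by (rule integrable_integral)
  from has_integral_closed_segment_unit[OF this]
  have "((\<lambda>s. \<phi> (s * e + (1 - s) * m)) has_integral 2 / (b - a) * integral (closed_segment m e) \<phi>) {0..1}"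
    using e ab by (auto simp: m_def field_simps)
  then have "((\<lambda>s. 8 / (b - a)\<^sup>2 * \<phi> (s * e + (1 - s) * m))
      has_integral 8 / (b - a)\<^sup>2 * (2 / (b - a) * integral (closed_segment m e) \<phi>)) {0..1}"
    by (rule has_integral_mult_right)
  moreover have pointwise: "8 / (b - a)\<^sup>2 * \<phi> (s * e + (1 - s) * m) = (1 - s\<^sup>2) * \<bar>u (s * e + (1 - s) * m)\<bar>" for s
  proof -
    define x where "x = s * e + (1 - s) * m"
    have kernel: "(x - a) * (b - x) / 2 = (b - a)\<^sup>2 / 8 * (1 - s\<^sup>2)"
      using e by (auto simp: x_def m_def power2_eq_square field_simps)
    have "8 / (b - a)\<^sup>2 * \<phi> x = 8 / (b - a)\<^sup>2 * ((x - a) * (b - x) / 2) * \<bar>u x\<bar>"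
      by (simp add: \<phi>_def)
    also have "\<dots> = 8 / (b - a)\<^sup>2 * ((b - a)\<^sup>2 / 8) * ((1 - s\<^sup>2) * \<bar>u x\<bar>)"
      unfolding kernel by (simp only: ac_simps)
    also have "8 / (b - a)\<^sup>2 * ((b - a)\<^sup>2 / 8) = 1"
      using ab by simp
    finally show ?thesis
      unfolding x_def by simp
  qed
  moreover have "8 / (b - a)\<^sup>2 * (2 / (b - a) * integral (closed_segment m e) \<phi>)
      = 16 / (b - a) ^ 3 * integral (closed_segment m e) \<phi>"
    by (simp add: power2_eq_square power3_eq_cube)
  ultimately show ?thesis
    unfolding pointwise by (simp add: \<phi>_def m_def)
qed

lemma h_convex_kernel_integral_le:
  fixes h u :: "real \<Rightarrow> real" and K :: "real set"
  assumes p: "p > 1" and q: "q > 1" and pq: "1/p + 1/q = 1"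
    and hconv: "h_convex_on h K (\<lambda>x. \<bar>u x\<bar> powr q)" and x: "x \<in> K" and y: "y \<in> K"
    and h: "(h has_integral H) {0<..<1}" and h_nonneg: "\<And>t. t \<in> {0<..<1} \<Longrightarrow> 0 \<le> h t"
    and int: "(\<lambda>s. (1 - s\<^sup>2) * \<bar>u (s * x + (1 - s) * y)\<bar>) integrable_on {0..1}"
  shows "integral {0..1} (\<lambda>s. (1 - s\<^sup>2) * \<bar>u (s * x + (1 - s) * y)\<bar>)
    \<le> Beta (1/2) (p + 1) powr (1/p) / 2 powr (1/p) * H powr (1/q)
       * (\<bar>u x\<bar> powr q + \<bar>u y\<bar> powr q) powr (1/q)"
proof -
  define w where "w s = h s * \<bar>u x\<bar> powr q + h (1 - s) * \<bar>u y\<bar> powr q" for s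
  have w: "(w has_integral H * (\<bar>u x\<bar> powr q + \<bar>u y\<bar> powr q)) {0<..<1}"
    using has_integral_add[OF has_integral_mult_left[OF h] has_integral_mult_left[OF has_integral_reflect_unit_interval[OF h]]]
    unfolding w_def by (simp add: distrib_left)
  have Beta_pos: "Beta (1/2) (p + 1) > 0"
    using p by (simp add: Beta_def Gamma_real_pos)
  have kernel: "((\<lambda>s. (1 - s\<^sup>2) powr p) has_integral Beta (1/2) (p + 1) / 2) {0<..<1}"
    using has_integral_one_minus_square_powr p by (simp add: has_integral_Icc_iff_Ioo)
  have "H \<ge> 0"
    using h h_nonneg by (rule has_integral_nonneg)
  have "integral {0..1} (\<lambda>s. (1 - s\<^sup>2) * \<bar>u (s * x + (1 - s) * y)\<bar>)
      = integral {0<..<1} (\<lambda>s. (1 - s\<^sup>2) * \<bar>u (s * x + (1 - s) * y)\<bar>)"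
    using int by (simp add: integral_open_interval_real)
  also have "\<dots> \<le> integral {0<..<1} (\<lambda>s. (1 - s\<^sup>2) powr p) powr (1/p) * integral {0<..<1} w powr (1/q)"
  proof (rule Holder_integral_le[OF p q pq])
    show "(\<lambda>s. (1 - s\<^sup>2) * \<bar>u (s * x + (1 - s) * y)\<bar>) integrable_on {0<..<1}"
      using int by (simp add: integrable_on_Icc_iff_Ioo)
    show "\<bar>u (s * x + (1 - s) * y)\<bar> powr q \<le> w s" if "s \<in> {0<..<1}" for s
      using hconv x y that unfolding h_convex_on_def w_def by blast
    show "0 \<le> 1 - s\<^sup>2" if "s \<in> {0<..<1}" for s :: real
      using that by (auto intro: power_le_one)
  qed (use kernel w Beta_pos in \<open>auto simp: integral_unique\<close>)
  also have "\<dots> = Beta (1/2) (p + 1) powr (1/p) / 2 powr (1/p) * H powr (1/q)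
       * (\<bar>u x\<bar> powr q + \<bar>u y\<bar> powr q) powr (1/q)"
    using \<open>H \<ge> 0\<close> Beta_pos
    by (simp add: integral_unique[OF kernel] integral_unique[OF w] powr_divide powr_mult)
  finally show ?thesis .
qed

lemma abs_integral_weighted_le:
  fixes w u :: "real \<Rightarrow> real"
  assumes w_cont: "continuous_on {a..b} w" and w_nonneg: "\<And>x. x \<in> {a..b} \<Longrightarrow> 0 \<le> w x"
    and u: "u absolutely_integrable_on {a..b}"
  shows "(\<lambda>x. w x * \<bar>u x\<bar>) integrable_on {a..b}"
    and "\<bar>integral {a..b} (\<lambda>x. w x * u x)\<bar> \<le> integral {a..b} (\<lambda>x. w x * \<bar>u x\<bar>)"
proof -
  have wu: "(\<lambda>x. w x * u x) absolutely_integrable_on {a..b}"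
  proof (rule absolutely_integrable_bounded_measurable_product_real[OF _ _ _ u])
    show "w \<in> borel_measurable (lebesgue_on {a..b})"
      by (rule continuous_imp_measurable_on_sets_lebesgue[OF w_cont]) auto
    show "bounded (w ` {a..b})"
      by (intro compact_imp_bounded compact_continuous_image[OF w_cont]) auto
  qed auto
  have norm_eq: "norm (w x * u x) = w x * \<bar>u x\<bar>" if "x \<in> {a..b}" for x
    using w_nonneg[OF that] by (simp add: abs_mult)
  show int: "(\<lambda>x. w x * \<bar>u x\<bar>) integrable_on {a..b}"
  proof (rule integrable_eq)
    show "(\<lambda>x. norm (w x * u x)) integrable_on {a..b}"
      using wu by (simp add: absolutely_integrable_on_def)
  qed (use norm_eq in auto)
  show "\<bar>integral {a..b} (\<lambda>x. w x * u x)\<bar> \<le> integral {a..b} (\<lambda>x. w x * \<bar>u x\<bar>)"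
    using integral_norm_bound_integral[OF set_lebesgue_integral_eq_integral(1)[OF wu] int] norm_eq
    by simp
qed

lemma absolutely_integrable_on_if_set_integrable_lborel:
  fixes f :: "real \<Rightarrow> real"
  assumes "set_integrable lborel S f"
  shows "f absolutely_integrable_on S"
  using set_borel_integral_eq_integral(1)[OF assms]
        set_borel_integral_eq_integral(1)[OF set_integrable_norm[OF assms]]
  by (simp add: absolutely_integrable_on_def)

lemma hermite_hadamard_gap_le_kernel_halves:
  fixes f f' f'' :: "real \<Rightarrow> real"
  assumes ab: "a < b"
    and f': "\<And>x. x \<in> {a..b} \<Longrightarrow> (f has_real_derivative f' x) (at x)"
    and f'': "\<And>x. x \<in> {a..b} \<Longrightarrow> (f' has_real_derivative f'' x) (at x)"
    and f''_abs: "f'' absolutely_integrable_on {a..b}"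
  defines "J e \<equiv> \<lambda>s. (1 - s\<^sup>2) * \<bar>f'' (s * e + (1 - s) * ((a + b) / 2))\<bar>"
  shows "J a integrable_on {0..1}" and "J b integrable_on {0..1}"
    and "\<bar>(f a + f b) / 2 - integral {a..b} f / (b - a)\<bar>
           \<le> (b - a)\<^sup>2 / 16 * (integral {0..1} (J a) + integral {0..1} (J b))"
proof -
  define m where "m = (a + b) / 2"
  define \<phi> where "\<phi> = (\<lambda>x. (x - a) * (b - x) / 2 * \<bar>f'' x\<bar>)"
  note weighted = abs_integral_weighted_le[where w="\<lambda>x. (x - a) * (b - x) / 2", OF _ _ f''_abs]
  have \<phi>_int: "\<phi> integrable_on {a..b}"
    and bound: "\<bar>integral {a..b} (\<lambda>x. (x - a) * (b - x) / 2 * f'' x)\<bar> \<le> integral {a..b} \<phi>"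
    unfolding \<phi>_def by (intro weighted continuous_intros; auto)+
  note half = hermite_hadamard_kernel_half_has_integral[OF \<phi>_int[unfolded \<phi>_def] ab, folded \<phi>_def J_def]
  have "closed_segment m a = {a..m}" "closed_segment m b = {m..b}"
    using ab by (auto simp: m_def closed_segment_eq_real_ivl)
  then have Ja: "(J a has_integral 16 / (b - a) ^ 3 * integral {a..m} \<phi>) {0..1}"
    and Jb: "(J b has_integral 16 / (b - a) ^ 3 * integral {m..b} \<phi>) {0..1}"
    using half[of a] half[of b] by (auto simp: m_def)
  then show "J a integrable_on {0..1}" "J b integrable_on {0..1}"
    by blast+
  have "integral {a..b} \<phi> = integral {a..m} \<phi> + integral {m..b} \<phi>"
    using Henstock_Kurzweil_Integration.integral_combine[OF _ _ \<phi>_int, of m] ab by (simp add: m_def)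
  also have "\<dots> = (b - a) ^ 3 / 16 * (integral {0..1} (J a) + integral {0..1} (J b))"
    using ab by (simp add: integral_unique[OF Ja] integral_unique[OF Jb] field_simps)
  finally have \<phi>_split: "integral {a..b} \<phi> = \<dots>" .
  have "integral {a..b} (\<lambda>x. (x - a) * (b - x) / 2 * f'' x) = (b - a) / 2 * (f a + f b) - integral {a..b} f"
    using ab f' f'' by (intro integral_unique hermite_hadamard_kernel_identity) auto
  then have "(f a + f b) / 2 - integral {a..b} f / (b - a)
      = integral {a..b} (\<lambda>x. (x - a) * (b - x) / 2 * f'' x) / (b - a)"
    using ab by (simp add: field_simps)
  then have "\<bar>(f a + f b) / 2 - integral {a..b} f / (b - a)\<bar>
      = \<bar>integral {a..b} (\<lambda>x. (x - a) * (b - x) / 2 * f'' x)\<bar> / (b - a)"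
    using ab by simp
  also have "\<dots> \<le> integral {a..b} \<phi> / (b - a)"
    using bound ab by (intro divide_right_mono) auto
  also have "\<dots> = (b - a)\<^sup>2 / 16 * (integral {0..1} (J a) + integral {0..1} (J b))"
    using ab by (simp add: \<phi>_split power2_eq_square power3_eq_cube field_simps)
  finally show "\<bar>(f a + f b) / 2 - integral {a..b} f / (b - a)\<bar>
      \<le> (b - a)\<^sup>2 / 16 * (integral {0..1} (J a) + integral {0..1} (J b))" .
qed

lemma hermite_hadamard_h_convex_le:
  fixes f f' f'' h :: "real \<Rightarrow> real"
  assumes ab: "a < b"
    and f': "\<And>x. x \<in> {a..b} \<Longrightarrow> (f has_real_derivative f' x) (at x)"
    and f'': "\<And>x. x \<in> {a..b} \<Longrightarrow> (f' has_real_derivative f'' x) (at x)"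
    and f''_abs: "f'' absolutely_integrable_on {a..b}"
    and p: "p > 1" and q: "q > 1" and pq: "1/p + 1/q = 1"
    and h: "(h has_integral H) {0<..<1}" and h_nonneg: "\<And>t. t \<in> {0<..<1} \<Longrightarrow> 0 \<le> h t"
    and hconv: "h_convex_on h {a..b} (\<lambda>x. \<bar>f'' x\<bar> powr q)"
  shows "\<bar>(f a + f b) / 2 - integral {a..b} f / (b - a)\<bar>
    \<le> (b - a)\<^sup>2 / 16 * (Beta (1/2) (p + 1) powr (1/p) / 2 powr (1/p) * H powr (1/q))
       * ((\<bar>f'' a\<bar> powr q + \<bar>f'' ((a + b) / 2)\<bar> powr q) powr (1/q)
          + (\<bar>f'' b\<bar> powr q + \<bar>f'' ((a + b) / 2)\<bar> powr q) powr (1/q))"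
proof -
  define m where "m = (a + b) / 2"
  define C where "C = Beta (1/2) (p + 1) powr (1/p) / 2 powr (1/p) * H powr (1/q)"
  note gap = hermite_hadamard_gap_le_kernel_halves[OF ab f' f'' f''_abs, folded m_def]
  have half_bound: "integral {0..1} (\<lambda>s. (1 - s\<^sup>2) * \<bar>f'' (s * e + (1 - s) * m)\<bar>)
      \<le> C * (\<bar>f'' e\<bar> powr q + \<bar>f'' m\<bar> powr q) powr (1/q)"
    if "e \<in> {a, b}" for e
    unfolding C_def
    by (rule h_convex_kernel_integral_le[OF p q pq hconv _ _ h h_nonneg])
      (use that ab gap(1,2) in \<open>auto simp: m_def\<close>)
  have "\<bar>(f a + f b) / 2 - integral {a..b} f / (b - a)\<bar>
      \<le> (b - a)\<^sup>2 / 16 * (integral {0..1} (\<lambda>s. (1 - s\<^sup>2) * \<bar>f'' (s * a + (1 - s) * m)\<bar>)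
                         + integral {0..1} (\<lambda>s. (1 - s\<^sup>2) * \<bar>f'' (s * b + (1 - s) * m)\<bar>))"
    by (rule gap(3))
  also have "\<dots> \<le> (b - a)\<^sup>2 / 16 * (C * (\<bar>f'' a\<bar> powr q + \<bar>f'' m\<bar> powr q) powr (1/q)
                                   + C * (\<bar>f'' b\<bar> powr q + \<bar>f'' m\<bar> powr q) powr (1/q))"
    by (intro mult_left_mono add_mono half_bound) auto
  finally show ?thesis
    unfolding C_def m_def by (simp add: algebra_simps)
qed

theorem theorem7:
  fixes I J :: "real set" and h f f' f'' :: "real \<Rightarrow> real" and a b p q :: real
  assumes J: "is_interval J" "{0<..<1} \<subseteq> J"
      and h_nonneg: "\<forall>t\<in>J. 0 \<le> h t"
      and h_nz: "\<exists>t\<in>J. h t \<noteq> 0"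
      and h_int: "set_integrable lborel {0<..<1} h"
      and I: "is_interval I" "I \<subseteq> {0..}"
      and ab: "a \<in> interior I" "b \<in> interior I" "a < b"
      and f': "\<And>x. x \<in> interior I \<Longrightarrow> (f has_real_derivative f' x) (at x)"
      and f'': "\<And>x. x \<in> interior I \<Longrightarrow> (f' has_real_derivative f'' x) (at x)"
      and f''_int: "set_integrable lborel {a..b} f''"
      and q: "q > 1" and p: "p = q / (q - 1)"
      and hconv: "h_convex_on h {a..b} (\<lambda>x. \<bar>f'' x\<bar> powr q)"
  shows "\<bar>(f a + f b) / 2 - (1 / (b - a)) * (LBINT x=a..b. f x)\<bar>
    \<le> (b - a)^2 / (16 * 2 powr (1 / p)) * Beta_fun (1/2) (p + 1) powr (1 / p)
       * (LBINT t=0..1. h t) powr (1 / q)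
       * ((\<bar>f'' a\<bar> powr q + \<bar>f'' ((a + b) / 2)\<bar> powr q) powr (1 / q)
          + (\<bar>f'' b\<bar> powr q + \<bar>f'' ((a + b) / 2)\<bar> powr q) powr (1 / q))"
proof -
  have p1: "p > 1" and pq: "1/p + 1/q = 1"
    using q unfolding p by (auto simp: field_simps)
  have "convex (interior I)"
    using I(1) by (simp add: convex_interior is_interval_convex)
  then have ab_I: "{a..b} \<subseteq> interior I"
    using ab by (metis convex_contains_segment closed_segment_eq_real_ivl less_imp_le)
  have "(h has_integral integral {0<..<1} h) {0<..<1}"
    using set_borel_integral_eq_integral(1)[OF h_int] by (rule integrable_integral)
  moreover have "\<And>t. t \<in> {0<..<1} \<Longrightarrow> 0 \<le> h t"
    using J(2) h_nonneg by blast
  ultimately have bound: "\<bar>(f a + f b) / 2 - integral {a..b} f / (b - a)\<bar>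
    \<le> (b - a)\<^sup>2 / 16 * (Beta (1/2) (p + 1) powr (1/p) / 2 powr (1/p) * integral {0<..<1} h powr (1/q))
       * ((\<bar>f'' a\<bar> powr q + \<bar>f'' ((a + b) / 2)\<bar> powr q) powr (1/q)
          + (\<bar>f'' b\<bar> powr q + \<bar>f'' ((a + b) / 2)\<bar> powr q) powr (1/q))"
    using ab_I f' f'' absolutely_integrable_on_if_set_integrable_lborel[OF f''_int]
    by (intro hermite_hadamard_h_convex_le[where f'=f', OF ab(3) _ _ _ p1 q pq _ _ hconv]) auto
  have "continuous_on {a..b} f"
    using ab_I f' by (meson DERIV_isCont continuous_at_imp_continuous_on subsetD)
  then have "(LBINT x=a..b. f x) = integral {a..b} f"
    using ab borel_integrable_compact[OF compact_Icc, of a b f]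
    by (intro interval_integral_eq_integral) (auto simp: set_integrable_def)
  moreover have "(LBINT t=0..1. h t) = integral {0<..<1} h"
    using interval_integral_eq_integral'[of 0 1 h] h_int by (simp add: zero_ereal_def one_ereal_def)
  moreover have "Beta_fun (1/2) (p + 1) = Beta (1/2) (p + 1)"
    using p1 by (intro Beta_fun_eq_Beta) auto
  ultimately show ?thesis
    using bound by (simp add: algebra_simps)
qed

end
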